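(* Let $\alpha\ge1$, $\beta$ odd, and let ${\cal C}=\langle (b\mid 0),(\ell\mid fh+2f)\rangle\subseteq R_{\alpha,\beta}$ be a $\mathbb{Z}_2\mathbb{Z}_4$-additive cyclic code of length $\alpha+\beta$, where $f,h,g\in\mathbb{Z}_4[x]$ with $fhg=x^\beta-1$, $b\in\mathbb{Z}_2[x]$ divides $x^\alpha-1$, and $\ell\in\mathbb{Z}_2[x]/(x^\alpha-1)$. If $g=1$ or $g=x^s-1$ for some positive divisor $s$ of $\beta$, then $\Phi({\cal C})$ is a linear binary code.
   Context: $R_{\alpha,\beta}=\mathbb{Z}_2[x]/(x^\alpha-1)\times\mathbb{Z}_4[x]/(x^\beta-1)$, identified with $\mathbb{Z}_2^\alpha\times\mathbb{Z}_4^\beta$ via coefficient vectors; it is a $\mathbb{Z}_4[x]$-module via $p\star(b\mid a)=(\tilde pb\mid pa)$, $\tilde p$ the reduction of $p$ mod 2. A $\mathbb{Z}_2\mathbb{Z}_4$-additive cyclic code is a $\mathbb{Z}_4[x]$-submodule; $\langle\cdot\rangle$ is the generated submodule. Gray map: for $u'\in\mathbb{Z}_4^n$ with $u'_i=\tilde u'_i+2\hat u'_i$, $\tilde u'_i,\hat u'_i\in\{0,1\}$, $\phi(u')=(\hat u'_0,\dots,\hat u'_{n-1},\tilde u'_0+\hat u'_0,\dots,\tilde u'_{n-1}+\hat u'_{n-1})$, and $\Phi(u\mid u')=(u\mid\phi(u'))\in\mathbb{Z}_2^{\alpha+2\beta}$. Linear means a $\mathbb{Z}_2$-subspace. *)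

theory Defs
  imports "HOL-Computational_Algebra.Polynomial" "HOL-Library.Z2" "HOL-Library.Numeral_Type"
begin

(* Z_2 is the type bit, Z_4 is the numeral type 4.
   Integer representative in {0,1,2,3} of an element of Z_4: *)
definition z4_int :: "4 \<Rightarrow> int" where
  "z4_int u = Rep_bit0 u"

definition red2 :: "4 \<Rightarrow> bit" where
  "red2 u = of_int (z4_int u)"

(* cyclic reduction of a polynomial modulo x^n - 1 (canonical representative of degree < n) *)
definition cyc :: "nat \<Rightarrow> 'a::comm_ring_1 poly \<Rightarrow> 'a poly" where
  "cyc n p = (\<Sum>i<n. monom (\<Sum>j\<in>{j. j \<le> degree p \<and> j mod n = i}. coeff p j) i)"

definition R_elems :: "nat \<Rightarrow> nat \<Rightarrow> (bit poly \<times> 4 poly) set" where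
  "R_elems \<alpha> \<beta> = {(b, a). cyc \<alpha> b = b \<and> cyc \<beta> a = a}"

definition radd :: "nat \<Rightarrow> nat \<Rightarrow> bit poly \<times> 4 poly \<Rightarrow> bit poly \<times> 4 poly \<Rightarrow> bit poly \<times> 4 poly" where
  "radd \<alpha> \<beta> u v = (cyc \<alpha> (fst u + fst v), cyc \<beta> (snd u + snd v))"

definition smul_R :: "nat \<Rightarrow> nat \<Rightarrow> 4 poly \<Rightarrow> bit poly \<times> 4 poly \<Rightarrow> bit poly \<times> 4 poly" where
  "smul_R \<alpha> \<beta> p u = (cyc \<alpha> (map_poly red2 p * fst u), cyc \<beta> (p * snd u))"

definition is_Z2Z4_cyclic_code :: "nat \<Rightarrow> nat \<Rightarrow> (bit poly \<times> 4 poly) set \<Rightarrow> bool" where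
  "is_Z2Z4_cyclic_code \<alpha> \<beta> C \<longleftrightarrow>
     C \<subseteq> R_elems \<alpha> \<beta> \<and> (0, 0) \<in> C \<and>
     (\<forall>u\<in>C. \<forall>v\<in>C. radd \<alpha> \<beta> u v \<in> C) \<and>
     (\<forall>p. \<forall>u\<in>C. smul_R \<alpha> \<beta> p u \<in> C)"

definition gen_code :: "nat \<Rightarrow> nat \<Rightarrow> (bit poly \<times> 4 poly) set \<Rightarrow> (bit poly \<times> 4 poly) set" where
  "gen_code \<alpha> \<beta> S = \<Inter>{C. is_Z2Z4_cyclic_code \<alpha> \<beta> C \<and> S \<subseteq> C}"

(* Gray map phi on the Z_4 part, via u_i = u~_i + 2 u^_i *)
definition tilde4 :: "4 \<Rightarrow> bit" where "tilde4 u = of_int (z4_int u mod 2)"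
definition hat4 :: "4 \<Rightarrow> bit" where "hat4 u = of_int (z4_int u div 2)"

(* Phi (b | a) in Z_2^(alpha + 2 beta), as a function on indices 0..alpha+2beta-1 (zero beyond) *)
definition Phi :: "nat \<Rightarrow> nat \<Rightarrow> bit poly \<times> 4 poly \<Rightarrow> (nat \<Rightarrow> bit)" where
  "Phi \<alpha> \<beta> u = (\<lambda>i.
     if i < \<alpha> then coeff (fst u) i
     else if i < \<alpha> + \<beta> then hat4 (coeff (snd u) (i - \<alpha>))
     else if i < \<alpha> + 2 * \<beta> then
        tilde4 (coeff (snd u) (i - \<alpha> - \<beta>)) + hat4 (coeff (snd u) (i - \<alpha> - \<beta>))
     else 0)"

(* linear binary code: Z_2-subspace (scalars are 0,1, so closure under 0 and addition) *)
definition binary_linear :: "(nat \<Rightarrow> bit) set \<Rightarrow> bool" where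
  "binary_linear S \<longleftrightarrow> (\<lambda>_. 0) \<in> S \<and> (\<forall>x\<in>S. \<forall>y\<in>S. (\<lambda>i. x i + y i) \<in> S)"

end

theory Submission
  imports Defs
begin

text \<open>
  Coordinatewise on \<open>\<int>\<^sub>4\<close> the Gray map satisfies \<open>\<phi>(x) + \<phi>(y) = \<phi>(x + y + 2xy)\<close>,
  so \<open>\<Phi>(C)\<close> is linear as soon as \<open>C\<close> contains \<open>(0 | 2 u * v)\<close> for all codewords,
  \<open>u * v\<close> being the componentwise product of their \<open>\<int>\<^sub>4\<close> parts.
  Modulo 2, the \<open>\<int>\<^sub>4\<close> part of every codeword lies in the ideal of
  \<open>\<int>\<^sub>2[x]/(x\<^sup>\<beta> - 1)\<close> generated by \<open>fh\<close>: this holds for the generators and is preserved by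
  the module operations. If \<open>g = 1\<close> that ideal is zero and all carries \<open>2 u * v\<close> vanish.
  If \<open>g = x\<^sup>s - 1\<close> then \<open>fh = 1 + x\<^sup>s + x\<^sup>2\<^sup>s + \<dots>\<close>, so these reductions are
  \<open>s\<close>-periodic; hence \<open>2 u * v = 2 r fh\<close> with \<open>r\<close> the product truncated to degree \<open>< s\<close>,
  which is the \<open>\<int>\<^sub>4\<close> part of \<open>2r\<close> acting on the generator \<open>(\<ell> | fh + 2f)\<close>; the binary
  part of that multiple vanishes.
\<close>

section \<open>Arithmetic in \<open>\<int>\<^sub>4\<close>\<close>

lemma z4_cases: "(x::4) = 0 \<or> x = 1 \<or> x = 2 \<or> x = 3"
proof (cases x)
  case (of_int z)
  then have "z = 0 \<or> z = 1 \<or> z = 2 \<or> z = 3" by auto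
  then show ?thesis using of_int by auto
qed

lemma z4_int_0 [simp]: "z4_int 0 = 0"
  and z4_int_1 [simp]: "z4_int 1 = 1"
  and z4_int_numeral [simp]: "z4_int (numeral w) = numeral w mod 4"
  by (simp_all add: z4_int_def bit0.Rep_numeral bit0.Rep_0 bit0.Rep_1)

lemma red2_0 [simp]: "red2 0 = 0" and red2_1 [simp]: "red2 1 = 1" and red2_2 [simp]: "red2 2 = 0"
  by (simp_all add: red2_def)

lemma red2_add: "red2 (x + y) = red2 x + red2 y"
  using z4_cases[of x] z4_cases[of y] by (auto simp: red2_def)

lemma red2_mult: "red2 (x * y) = red2 x * red2 y"
  using z4_cases[of x] z4_cases[of y] by (auto simp: red2_def)

lemma two_mult_eq_if_red2_eq: "red2 x = red2 y \<Longrightarrow> 2 * x = 2 * y"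
  using z4_cases[of x] z4_cases[of y] by (auto simp: red2_def)

lemma two_mult_mult_eq_if_red2_eq:
  "red2 x = red2 x' \<Longrightarrow> red2 y = red2 y' \<Longrightarrow> 2 * (x * y) = 2 * (x' * y')"
  by (rule two_mult_eq_if_red2_eq) (simp add: red2_mult)

lemma two_mult_two_mult_eq_0: "2 * (2 * x) = (0 :: 4)"
proof -
  have "red2 (2 * x) = red2 0" by (simp add: red2_mult)
  then have "2 * (2 * x) = 2 * (0 :: 4)" by (rule two_mult_eq_if_red2_eq)
  then show ?thesis by (simp only: mult_zero_right)
qed

lemma hat4_add_carry: "hat4 (x + y + 2 * (x * y)) = hat4 x + hat4 y"
  using z4_cases[of x] z4_cases[of y] by (auto simp: hat4_def)

lemma tilde4_add_carry: "tilde4 (x + y + 2 * (x * y)) = tilde4 x + tilde4 y"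
  using z4_cases[of x] z4_cases[of y] by (auto simp: tilde4_def)

lemma tilde4_0 [simp]: "tilde4 0 = 0" and hat4_0 [simp]: "hat4 0 = 0"
  by (simp_all add: tilde4_def hat4_def)

lemma map_poly_add_hom:
  fixes h :: "'a::comm_monoid_add \<Rightarrow> 'b::comm_monoid_add"
  assumes "h 0 = 0" "\<And>x y. h (x + y) = h x + h y"
  shows "map_poly h (p + q) = map_poly h p + map_poly h q"
  by (rule poly_eqI) (simp add: coeff_map_poly assms)

lemma map_poly_diff_hom:
  fixes h :: "'a::ab_group_add \<Rightarrow> 'b::ab_group_add"
  assumes "h 0 = 0" "\<And>x y. h (x + y) = h x + h y"
  shows "map_poly h (p - q) = map_poly h p - map_poly h q"
proof -
  have "h (x - y) = h x - h y" for x y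
    using assms(2)[of "x - y" y] by (simp add: algebra_simps)
  then show ?thesis by (intro poly_eqI) (simp add: coeff_map_poly assms(1))
qed

lemma map_poly_mult_hom:
  fixes h :: "'a::comm_semiring_0 \<Rightarrow> 'b::comm_semiring_0"
  assumes "h 0 = 0" "\<And>x y. h (x + y) = h x + h y" "\<And>x y. h (x * y) = h x * h y"
  shows "map_poly h (p * q) = map_poly h p * map_poly h q"
proof (rule poly_eqI)
  fix n
  have "h (coeff (p * q) n) = (\<Sum>i\<le>n. h (coeff p i * coeff q (n - i)))"
    unfolding coeff_mult by (rule sum_comp_morphism[symmetric, unfolded comp_def]) (fact assms)+
  then show "coeff (map_poly h (p * q)) n = coeff (map_poly h p * map_poly h q) n"
    by (simp add: coeff_map_poly coeff_mult assms)
qed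

lemmas map_poly_red2_add = map_poly_add_hom[of red2, OF red2_0 red2_add]
lemmas map_poly_red2_diff = map_poly_diff_hom[of red2, OF red2_0 red2_add]
lemmas map_poly_red2_mult = map_poly_mult_hom[of red2, OF red2_0 red2_add red2_mult]

lemma map_poly_red2_two_mult: "map_poly red2 (2 * p) = 0"
  by (rule poly_eqI) (simp add: coeff_map_poly numeral_poly red2_mult)

section \<open>Reduction modulo \<open>x\<^sup>n - 1\<close>\<close>

lemma coeff_cyc:
  "coeff (cyc n p) i = (if i < n then (\<Sum>j\<in>{j. j \<le> degree p \<and> j mod n = i}. coeff p j) else 0)"
  unfolding cyc_def coeff_sum by (simp add: coeff_monom)

lemma cyc_0 [simp]: "cyc n 0 = 0"
  by (simp add: cyc_def)

lemma coeff_cyc_ge: "n \<le> i \<Longrightarrow> coeff (cyc n p) i = 0"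
  by (simp add: coeff_cyc)

lemma cyc_eq_sum_monom:
  assumes "n > 0"
  shows "cyc n p = (\<Sum>j\<le>degree p. monom (coeff p j) (j mod n))"
proof (rule poly_eqI)
  fix i
  have "coeff (\<Sum>j\<le>degree p. monom (coeff p j) (j mod n)) i
      = (\<Sum>j\<le>degree p. if j mod n = i then coeff p j else 0)"
    by (simp add: coeff_sum coeff_monom)
  also have "\<dots> = (\<Sum>j\<in>{j \<in> {..degree p}. j mod n = i}. coeff p j)"
    by (rule sum.inter_filter[symmetric]) simp
  also have "\<dots> = coeff (cyc n p) i"
  proof (cases "i < n")
    case False
    then have "{j \<in> {..degree p}. j mod n = i} = {}" using assms by auto
    then show ?thesis using False by (simp only: sum.empty coeff_cyc_ge not_less)
  qed (simp add: coeff_cyc atMost_def)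
  finally show "coeff (cyc n p) i = coeff (\<Sum>j\<le>degree p. monom (coeff p j) (j mod n)) i" ..
qed

lemma x_pow_minus_one_dvd_cyc_diff:
  fixes p :: "'a::comm_ring_1 poly"
  assumes "n > 0"
  shows "(monom 1 n - 1) dvd (cyc n p - p)"
proof -
  have "cyc n p - p = (\<Sum>j\<le>degree p. monom (coeff p j) (j mod n) - monom (coeff p j) j)"
    by (subst (2) poly_as_sum_of_monoms[symmetric]) (simp add: cyc_eq_sum_monom[OF assms] sum_subtractf)
  also have "(monom 1 n - 1) dvd \<dots>"
  proof (rule dvd_sum)
    fix j
    have "monom (coeff p j) j = monom (coeff p j) (j mod n) * monom 1 n ^ (j div n)"
      by (simp add: monom_power mult_monom)
    then have "monom (coeff p j) (j mod n) - monom (coeff p j) j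
        = - (monom (coeff p j) (j mod n) * (monom 1 n ^ (j div n) - 1))"
      by (simp add: algebra_simps)
    then show "(monom 1 n - 1) dvd (monom (coeff p j) (j mod n) - monom (coeff p j) j)"
      by (simp add: power_diff_1_eq)
  qed
  finally show ?thesis .
qed

lemma coeff_x_pow_minus_one_mult:
  fixes k :: "'a::comm_ring_1 poly"
  assumes "n > 0"
  shows "coeff ((monom 1 n - 1) * k) (degree k + n) = lead_coeff k"
proof -
  have "coeff k (degree k + n) = 0" using assms by (intro coeff_eq_0) simp
  then show ?thesis by (simp add: left_diff_distrib coeff_monom_mult)
qed

lemma x_pow_minus_one_mult_eq_0_iff:
  fixes k :: "'a::comm_ring_1 poly"
  assumes "n > 0"
  shows "(monom 1 n - 1) * k = 0 \<longleftrightarrow> k = 0"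
  using coeff_x_pow_minus_one_mult[OF assms, of k] by (cases "k = 0") auto

lemma x_pow_minus_one_dvd_imp_eq_0:
  fixes d :: "'a::comm_ring_1 poly"
  assumes "n > 0" "(monom 1 n - 1) dvd d" "\<forall>i\<ge>n. coeff d i = 0"
  shows "d = 0"
proof -
  obtain k where k: "d = (monom 1 n - 1) * k" using assms(2) by blast
  then have "lead_coeff k = 0"
    using coeff_x_pow_minus_one_mult[OF assms(1), of k] assms(3) by simp
  then show ?thesis using k by simp
qed

lemma cyc_unique:
  fixes p r :: "'a::comm_ring_1 poly"
  assumes "n > 0" "\<forall>i\<ge>n. coeff r i = 0" "(monom 1 n - 1) dvd (r - p)"
  shows "cyc n p = r"
proof -
  have "(monom 1 n - 1) dvd ((cyc n p - p) - (r - p))"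
    using x_pow_minus_one_dvd_cyc_diff[OF assms(1)] assms(3) by (rule dvd_diff)
  then have "cyc n p - r = 0"
    using assms(1,2) by (intro x_pow_minus_one_dvd_imp_eq_0) (auto simp: coeff_cyc_ge)
  then show ?thesis by simp
qed

lemma cyc_eq_self: "n > 0 \<Longrightarrow> \<forall>i\<ge>n. coeff p i = 0 \<Longrightarrow> cyc n p = p"
  by (rule cyc_unique) auto

lemma cyc_cyc [simp]: "n > 0 \<Longrightarrow> cyc n (cyc n p) = cyc n p"
  by (rule cyc_eq_self) (auto simp: coeff_cyc_ge)

lemma cyc_eqI:
  fixes p q :: "'a::comm_ring_1 poly"
  assumes "n > 0" "(monom 1 n - 1) dvd (p - q)"
  shows "cyc n p = cyc n q"
proof (rule cyc_unique[OF assms(1)])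
  have "(monom 1 n - 1) dvd ((cyc n q - q) - (p - q))"
    using x_pow_minus_one_dvd_cyc_diff[OF assms(1)] assms(2) by (rule dvd_diff)
  then show "(monom 1 n - 1) dvd (cyc n q - p)" by simp
qed (simp add: coeff_cyc_ge)

lemma cyc_add_cyc:
  fixes p q :: "'a::comm_ring_1 poly"
  assumes "n > 0" shows "cyc n (cyc n p + cyc n q) = cyc n (p + q)"
proof (rule cyc_eqI[OF assms])
  have "(monom 1 n - 1) dvd ((cyc n p - p) + (cyc n q - q))"
    using x_pow_minus_one_dvd_cyc_diff[OF assms] by (intro dvd_add)
  then show "(monom 1 n - 1) dvd (cyc n p + cyc n q - (p + q))" by (simp add: algebra_simps)
qed

lemma cyc_mult_cyc:
  fixes p q :: "'a::comm_ring_1 poly"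
  assumes "n > 0" shows "cyc n (p * cyc n q) = cyc n (p * q)"
proof (rule cyc_eqI[OF assms])
  have "(monom 1 n - 1) dvd (p * (cyc n q - q))"
    using x_pow_minus_one_dvd_cyc_diff[OF assms] by (intro dvd_mult)
  then show "(monom 1 n - 1) dvd (p * cyc n q - p * q)" by (simp add: algebra_simps)
qed

lemma map_poly_red2_cyc:
  assumes "n > 0" shows "map_poly red2 (cyc n p) = cyc n (map_poly red2 p)"
proof (rule sym, rule cyc_unique[OF assms])
  show "\<forall>i\<ge>n. coeff (map_poly red2 (cyc n p)) i = 0" by (simp add: coeff_map_poly coeff_cyc_ge)
  obtain k where "cyc n p - p = (monom 1 n - 1) * k"
    using x_pow_minus_one_dvd_cyc_diff[OF assms, of p] by blast
  then have "map_poly red2 (cyc n p) - map_poly red2 p = map_poly red2 (monom 1 n - 1) * map_poly red2 k"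
    by (simp only: map_poly_red2_diff[symmetric] map_poly_red2_mult[symmetric])
  also have "map_poly red2 (monom 1 n - 1) = monom 1 n - 1"
    by (simp add: map_poly_red2_diff map_poly_monom)
  finally show "(monom 1 n - 1) dvd (map_poly red2 (cyc n p) - map_poly red2 p)" by simp
qed

definition geom_poly :: "nat \<Rightarrow> nat \<Rightarrow> 'a::comm_semiring_1 poly" where
  "geom_poly s m = (\<Sum>k<m. monom 1 (s * k))"

lemma x_pow_minus_one_mult_geom_poly:
  "(monom 1 s - 1) * geom_poly s m = (monom 1 (s * m) - 1 :: 'a::comm_ring_1 poly)"
proof -
  have "(monom 1 s - 1) * geom_poly s m = (monom 1 s - 1) * (\<Sum>k<m. (monom 1 s :: 'a poly) ^ k)"
    by (simp add: geom_poly_def monom_power)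
  also have "\<dots> = monom 1 s ^ m - 1"
    by (rule power_diff_1_eq[symmetric])
  finally show ?thesis by (simp add: monom_power)
qed

lemma eq_geom_poly_if_x_pow_minus_one_mult:
  fixes p :: "'a::comm_ring_1 poly"
  assumes "s > 0" "(monom 1 s - 1) * p = monom 1 (s * m) - 1"
  shows "p = geom_poly s m"
proof -
  have "(monom 1 s - 1) * (p - geom_poly s m) = 0"
    by (simp add: right_diff_distrib assms(2) x_pow_minus_one_mult_geom_poly)
  then show ?thesis by (simp only: x_pow_minus_one_mult_eq_0_iff[OF assms(1)] right_minus_eq)
qed

lemma coeff_mult_geom_poly:
  fixes r :: "'a::comm_semiring_1 poly"
  assumes "\<forall>i\<ge>s. coeff r i = 0"
  shows "coeff (r * geom_poly s m) j = (if j < s * m then coeff r (j mod s) else 0)"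
proof (induction m)
  case 0 then show ?case by (simp add: geom_poly_def)
next
  case (Suc m)
  have "coeff (r * geom_poly s (Suc m)) j = coeff (r * geom_poly s m) j + coeff (monom 1 (s * m) * r) j"
    by (simp add: geom_poly_def algebra_simps)
  also have "\<dots> = (if j < s * m then coeff r (j mod s) else coeff r (j - s * m))"
    using Suc by (simp add: coeff_monom_mult)
  also have "\<dots> = (if j < s * Suc m then coeff r (j mod s) else 0)"
  proof (cases "j < s * m")
    case False
    then obtain d where d: "j = s * m + d" by (metis le_Suc_ex not_less)
    then show ?thesis using False assms by (cases "d < s") simp_all
  qed simp
  finally show ?case .
qed

lemma map_poly_red2_geom_poly: "map_poly red2 (geom_poly s m) = geom_poly s m"
  by (induction m) (simp_all add: geom_poly_def map_poly_red2_add map_poly_monom)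

section \<open>Cyclic codes and the Gray map\<close>

lemma R_elems_coeff_ge:
  assumes "u \<in> R_elems \<alpha> \<beta>"
  shows "\<alpha> \<le> i \<Longrightarrow> coeff (fst u) i = 0" and "\<beta> \<le> i \<Longrightarrow> coeff (snd u) i = 0"
  using assms coeff_cyc_ge[of \<alpha> i "fst u"] coeff_cyc_ge[of \<beta> i "snd u"]
  by (auto simp: R_elems_def)

lemma is_Z2Z4_cyclic_code_R_elems:
  "\<alpha> > 0 \<Longrightarrow> \<beta> > 0 \<Longrightarrow> is_Z2Z4_cyclic_code \<alpha> \<beta> (R_elems \<alpha> \<beta>)"
  by (auto simp: is_Z2Z4_cyclic_code_def R_elems_def radd_def smul_R_def)

lemma is_Z2Z4_cyclic_code_gen_code:
  assumes "\<alpha> > 0" "\<beta> > 0" "S \<subseteq> R_elems \<alpha> \<beta>"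
  shows "is_Z2Z4_cyclic_code \<alpha> \<beta> (gen_code \<alpha> \<beta> S)"
proof -
  have "gen_code \<alpha> \<beta> S \<subseteq> R_elems \<alpha> \<beta>"
    using is_Z2Z4_cyclic_code_R_elems[OF assms(1,2)] assms(3) by (auto simp: gen_code_def)
  then show ?thesis by (auto simp: gen_code_def is_Z2Z4_cyclic_code_def)
qed

lemma gen_code_superset: "S \<subseteq> gen_code \<alpha> \<beta> S"
  by (auto simp: gen_code_def)

lemma gen_code_least: "is_Z2Z4_cyclic_code \<alpha> \<beta> C \<Longrightarrow> S \<subseteq> C \<Longrightarrow> gen_code \<alpha> \<beta> S \<subseteq> C"
  by (auto simp: gen_code_def)

definition hadamard_poly :: "nat \<Rightarrow> 'a::comm_semiring_0 poly \<Rightarrow> 'a poly \<Rightarrow> 'a poly" where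
  "hadamard_poly n p q = (\<Sum>j<n. monom (coeff p j * coeff q j) j)"

lemma coeff_hadamard_poly:
  "coeff (hadamard_poly n p q) j = (if j < n then coeff p j * coeff q j else 0)"
  by (simp add: hadamard_poly_def coeff_sum coeff_monom)

lemma coeff_two_mult: "coeff (2 * p) j = 2 * coeff p j"
  by (simp add: numeral_poly)

lemma two_mult_add_two_mult: "2 * (p + 2 * q) = 2 * (p :: 4 poly)"
proof -
  have "2 * (2 * q) = 0"
    by (rule poly_eqI) (simp only: coeff_two_mult coeff_0 two_mult_two_mult_eq_0)
  then show ?thesis by (simp only: distrib_left add_0_right)
qed

lemma Phi_radd_carry:
  assumes "\<alpha> > 0" "\<beta> > 0" "u \<in> R_elems \<alpha> \<beta>" "v \<in> R_elems \<alpha> \<beta>"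
  shows "Phi \<alpha> \<beta> (radd \<alpha> \<beta> (radd \<alpha> \<beta> u v) (0, cyc \<beta> (2 * hadamard_poly \<beta> (snd u) (snd v))))
    = (\<lambda>i. Phi \<alpha> \<beta> u i + Phi \<alpha> \<beta> v i)"
    (is "Phi \<alpha> \<beta> ?w = _")
proof -
  let ?a = "snd u + snd v + 2 * hadamard_poly \<beta> (snd u) (snd v)"
  have "fst ?w = cyc \<alpha> (fst u + fst v)"
    using assms(1) by (simp add: radd_def)
  also have "\<dots> = fst u + fst v"
    using assms by (intro cyc_eq_self) (auto simp: R_elems_coeff_ge)
  finally have fst_w: "fst ?w = fst u + fst v" .
  have "snd ?w = ?a"
    unfolding radd_def snd_conv cyc_add_cyc[OF assms(2)] using assms
    by (intro cyc_eq_self) (auto simp: R_elems_coeff_ge coeff_two_mult coeff_hadamard_poly)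
  then have hat_w: "hat4 (coeff (snd ?w) j) = hat4 (coeff (snd u) j) + hat4 (coeff (snd v) j)"
    and tilde_w: "tilde4 (coeff (snd ?w) j) = tilde4 (coeff (snd u) j) + tilde4 (coeff (snd v) j)"
    if "j < \<beta>" for j
    using that by (simp_all add: coeff_two_mult coeff_hadamard_poly hat4_add_carry tilde4_add_carry)
  show ?thesis
  proof
    fix i
    consider "i < \<alpha>" | "\<alpha> \<le> i" "i < \<alpha> + \<beta>" | "\<alpha> + \<beta> \<le> i" "i < \<alpha> + 2 * \<beta>"
      | "\<alpha> + 2 * \<beta> \<le> i" by linarith
    then show "Phi \<alpha> \<beta> ?w i = Phi \<alpha> \<beta> u i + Phi \<alpha> \<beta> v i"
    proof cases
      case 3
      let ?j = "i - \<alpha> - \<beta>"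
      have "Phi \<alpha> \<beta> ?w i = (tilde4 (coeff (snd u) ?j) + tilde4 (coeff (snd v) ?j))
          + (hat4 (coeff (snd u) ?j) + hat4 (coeff (snd v) ?j))"
        using 3 by (simp add: Phi_def hat_w tilde_w)
      also have "\<dots> = Phi \<alpha> \<beta> u i + Phi \<alpha> \<beta> v i"
        using 3 by (simp only: Phi_def if_not_P if_P not_less add_ac)
      finally show ?thesis .
    qed (simp_all add: Phi_def fst_w hat_w)
  qed
qed

lemma binary_linear_Phi_image:
  assumes "\<alpha> > 0" "\<beta> > 0" "is_Z2Z4_cyclic_code \<alpha> \<beta> C"
    and carry_mem: "\<And>u v. u \<in> C \<Longrightarrow> v \<in> C \<Longrightarrow> (0, cyc \<beta> (2 * hadamard_poly \<beta> (snd u) (snd v))) \<in> C"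
  shows "binary_linear (Phi \<alpha> \<beta> ` C)"
  unfolding binary_linear_def
proof (intro conjI ballI)
  have "Phi \<alpha> \<beta> (0, 0) = (\<lambda>_. 0)" by (auto simp: Phi_def)
  moreover have "(0, 0) \<in> C" using assms(3) by (simp add: is_Z2Z4_cyclic_code_def)
  ultimately show "(\<lambda>_. 0) \<in> Phi \<alpha> \<beta> ` C" by (rule image_eqI[OF sym])
next
  fix x y assume "x \<in> Phi \<alpha> \<beta> ` C" "y \<in> Phi \<alpha> \<beta> ` C"
  then obtain u v where uv: "u \<in> C" "v \<in> C" "x = Phi \<alpha> \<beta> u" "y = Phi \<alpha> \<beta> v" by auto
  let ?w = "radd \<alpha> \<beta> (radd \<alpha> \<beta> u v) (0, cyc \<beta> (2 * hadamard_poly \<beta> (snd u) (snd v)))"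
  have "u \<in> R_elems \<alpha> \<beta>" "v \<in> R_elems \<alpha> \<beta>"
    using assms(3) uv(1,2) by (auto simp: is_Z2Z4_cyclic_code_def)
  then have "(\<lambda>i. x i + y i) = Phi \<alpha> \<beta> ?w"
    using Phi_radd_carry[OF assms(1,2)] uv(3,4) by simp
  moreover have "?w \<in> C"
    using assms(3) carry_mem[OF uv(1,2)] uv(1,2) by (simp add: is_Z2Z4_cyclic_code_def)
  ultimately show "(\<lambda>i. x i + y i) \<in> Phi \<alpha> \<beta> ` C" by (rule image_eqI)
qed

section \<open>Reductions modulo 2 of the \<open>\<int>\<^sub>4\<close> parts\<close>

definition residue_code :: "nat \<Rightarrow> nat \<Rightarrow> bit poly \<Rightarrow> (bit poly \<times> 4 poly) set" where
  "residue_code \<alpha> \<beta> F = {u \<in> R_elems \<alpha> \<beta>. \<exists>c. map_poly red2 (snd u) = cyc \<beta> (c * F)}"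

lemma is_Z2Z4_cyclic_code_residue_code:
  assumes "\<alpha> > 0" "\<beta> > 0"
  shows "is_Z2Z4_cyclic_code \<alpha> \<beta> (residue_code \<alpha> \<beta> F)"
  unfolding is_Z2Z4_cyclic_code_def
proof (intro conjI ballI allI)
  show "residue_code \<alpha> \<beta> F \<subseteq> R_elems \<alpha> \<beta>" by (auto simp: residue_code_def)
  show "(0, 0) \<in> residue_code \<alpha> \<beta> F"
    by (auto simp: residue_code_def R_elems_def intro: exI[of _ 0])
next
  fix u v assume "u \<in> residue_code \<alpha> \<beta> F" "v \<in> residue_code \<alpha> \<beta> F"
  then obtain c d where "map_poly red2 (snd u) = cyc \<beta> (c * F)" "map_poly red2 (snd v) = cyc \<beta> (d * F)"
    by (auto simp: residue_code_def)
  then have "map_poly red2 (snd (radd \<alpha> \<beta> u v)) = cyc \<beta> ((c + d) * F)"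
    by (simp add: radd_def map_poly_red2_cyc[OF assms(2)] map_poly_red2_add cyc_add_cyc[OF assms(2)]
        algebra_simps)
  then show "radd \<alpha> \<beta> u v \<in> residue_code \<alpha> \<beta> F"
    using assms by (auto simp: residue_code_def R_elems_def radd_def)
next
  fix p u assume "u \<in> residue_code \<alpha> \<beta> F"
  then obtain c where "map_poly red2 (snd u) = cyc \<beta> (c * F)" by (auto simp: residue_code_def)
  then have "map_poly red2 (snd (smul_R \<alpha> \<beta> p u)) = cyc \<beta> ((map_poly red2 p * c) * F)"
    by (simp add: smul_R_def map_poly_red2_cyc[OF assms(2)] map_poly_red2_mult cyc_mult_cyc[OF assms(2)]
        algebra_simps)
  then show "smul_R \<alpha> \<beta> p u \<in> residue_code \<alpha> \<beta> F"
    using assms by (auto simp: residue_code_def R_elems_def smul_R_def)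
qed

lemma gen_code_subset_residue_code:
  assumes "\<alpha> > 0" "\<beta> > 0"
  shows "gen_code \<alpha> \<beta> {(cyc \<alpha> b, 0), (cyc \<alpha> l, cyc \<beta> (p + 2 * q))}
    \<subseteq> residue_code \<alpha> \<beta> (map_poly red2 p)"
proof (rule gen_code_least[OF is_Z2Z4_cyclic_code_residue_code[OF assms]])
  have "map_poly red2 (cyc \<beta> (p + 2 * q)) = cyc \<beta> (1 * map_poly red2 p)"
    by (simp add: map_poly_red2_cyc[OF assms(2)] map_poly_red2_add map_poly_red2_two_mult)
  then show "{(cyc \<alpha> b, 0), (cyc \<alpha> l, cyc \<beta> (p + 2 * q))} \<subseteq> residue_code \<alpha> \<beta> (map_poly red2 p)"
    using assms by (auto simp: residue_code_def R_elems_def intro: exI[of _ 0] exI[of _ 1])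
qed

lemma two_mult_hadamard_poly_eq_0:
  assumes "map_poly red2 p = 0"
  shows "2 * hadamard_poly n p q = 0"
proof (rule poly_eqI)
  fix j
  have "red2 (coeff p j) = 0" using assms by (metis coeff_0 coeff_map_poly red2_0)
  then show "coeff (2 * hadamard_poly n p q) j = coeff 0 j"
    using two_mult_mult_eq_if_red2_eq[of "coeff p j" 0 "coeff q j" "coeff q j"]
    by (simp add: coeff_two_mult coeff_hadamard_poly)
qed

lemma two_mult_hadamard_poly_mem_trivial:
  assumes "\<beta> > 0" "is_Z2Z4_cyclic_code \<alpha> \<beta> C" "C \<subseteq> residue_code \<alpha> \<beta> (monom 1 \<beta> - 1)"
    and "u \<in> C"
  shows "(0, cyc \<beta> (2 * hadamard_poly \<beta> (snd u) (snd v))) \<in> C"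
proof -
  obtain c where "map_poly red2 (snd u) = cyc \<beta> (c * (monom 1 \<beta> - 1))"
    using assms(3,4) by (auto simp: residue_code_def)
  also have "\<dots> = cyc \<beta> 0" by (rule cyc_eqI[OF assms(1)]) simp
  finally have "2 * hadamard_poly \<beta> (snd u) (snd v) = 0"
    by (intro two_mult_hadamard_poly_eq_0) simp
  then show ?thesis using assms(2) by (simp add: is_Z2Z4_cyclic_code_def)
qed

lemma residue_code_geom_poly_periodic:
  assumes "s > 0" "u \<in> residue_code \<alpha> (s * m) (geom_poly s m)" "j < s * m"
  shows "red2 (coeff (snd u) j) = red2 (coeff (snd u) (j mod s))"
proof -
  obtain c where c: "map_poly red2 (snd u) = cyc (s * m) (c * geom_poly s m)"
    using assms(2) by (auto simp: residue_code_def)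
  have sm: "s * m > 0" using assms(3) by linarith
  define r where "r = cyc s c"
  have r_ge: "\<forall>i\<ge>s. coeff r i = 0" by (simp add: r_def coeff_cyc_ge)
  obtain k where k: "r - c = (monom 1 s - 1) * k"
    using x_pow_minus_one_dvd_cyc_diff[OF assms(1), of c] unfolding r_def by blast
  have "(r - c) * geom_poly s m = k * ((monom 1 s - 1) * geom_poly s m)"
    by (simp add: k ac_simps)
  also have "\<dots> = k * (monom 1 (s * m) - 1)"
    by (simp add: x_pow_minus_one_mult_geom_poly)
  finally have "c * geom_poly s m - r * geom_poly s m = - (k * (monom 1 (s * m) - 1))"
    by (simp add: algebra_simps)
  then have "cyc (s * m) (c * geom_poly s m) = cyc (s * m) (r * geom_poly s m)"
    using sm by (intro cyc_eqI) simp_all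
  also have "\<dots> = r * geom_poly s m"
    using sm by (intro cyc_eq_self) (auto simp: coeff_mult_geom_poly[OF r_ge])
  finally have "map_poly red2 (snd u) = r * geom_poly s m" using c by simp
  then have "red2 (coeff (snd u) i) = coeff r (i mod s)" if "i < s * m" for i
    using that coeff_mult_geom_poly[OF r_ge, of m i] by (metis coeff_map_poly red2_0)
  moreover have "j mod s < s * m"
  proof (rule less_le_trans)
    show "j mod s < s" using assms(1) by simp
    show "s \<le> s * m" using sm by (cases m) auto
  qed
  ultimately show ?thesis using assms(3) by simp
qed

lemma two_mult_hadamard_poly_mem_periodic:
  assumes "\<alpha> > 0" "s > 0" "m > 0" "is_Z2Z4_cyclic_code \<alpha> (s * m) C"
    and "C \<subseteq> residue_code \<alpha> (s * m) (geom_poly s m)"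
    and "(l, cyc (s * m) X) \<in> C" "2 * X = 2 * geom_poly s m"
    and "u \<in> C" "v \<in> C"
  shows "(0, cyc (s * m) (2 * hadamard_poly (s * m) (snd u) (snd v))) \<in> C"
proof -
  define r where "r = hadamard_poly s (snd u) (snd v)"
  have r_ge: "\<forall>i\<ge>s. coeff r i = 0" by (simp add: r_def coeff_hadamard_poly)
  have "2 * hadamard_poly (s * m) (snd u) (snd v) = 2 * (r * geom_poly s m)"
  proof (rule poly_eqI)
    fix j
    show "coeff (2 * hadamard_poly (s * m) (snd u) (snd v)) j = coeff (2 * (r * geom_poly s m)) j"
    proof (cases "j < s * m")
      case True
      have "red2 (coeff (snd w) j) = red2 (coeff (snd w) (j mod s))" if "w \<in> C" for w
        using residue_code_geom_poly_periodic[OF assms(2) _ True] assms(5) that by blast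
      then have "2 * (coeff (snd u) j * coeff (snd v) j)
          = 2 * (coeff (snd u) (j mod s) * coeff (snd v) (j mod s))"
        using assms(8,9) by (intro two_mult_mult_eq_if_red2_eq)
      moreover have "coeff (r * geom_poly s m) j = coeff (snd u) (j mod s) * coeff (snd v) (j mod s)"
        using True assms(2) by (simp add: coeff_mult_geom_poly[OF r_ge]) (simp add: r_def coeff_hadamard_poly)
      ultimately show ?thesis
        using True by (simp add: coeff_two_mult coeff_hadamard_poly)
    qed (simp add: coeff_two_mult coeff_hadamard_poly coeff_mult_geom_poly[OF r_ge])
  qed
  moreover have "smul_R \<alpha> (s * m) (2 * r) (l, cyc (s * m) X) = (0, cyc (s * m) (2 * (r * geom_poly s m)))"
  proof -
    have "2 * r * X = r * (2 * X)" by (simp add: ac_simps)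
    also have "\<dots> = 2 * (r * geom_poly s m)" by (metis assms(7) mult.left_commute)
    finally have "cyc (s * m) (2 * r * cyc (s * m) X) = cyc (s * m) (2 * (r * geom_poly s m))"
      using assms(2,3) by (simp add: cyc_mult_cyc)
    then show ?thesis by (simp add: smul_R_def map_poly_red2_two_mult)
  qed
  moreover have "smul_R \<alpha> (s * m) (2 * r) (l, cyc (s * m) X) \<in> C"
    using assms(4,6) by (simp add: is_Z2Z4_cyclic_code_def)
  ultimately show ?thesis by simp
qed

theorem mainTheorem7:
  fixes \<alpha> \<beta> :: nat and f h g :: "4 poly" and b l :: "bit poly"
  assumes "\<alpha> \<ge> 1" and "odd \<beta>"
    and "f * h * g = monom 1 \<beta> - 1"
    and "b dvd (monom 1 \<alpha> - 1)"
    and "g = 1 \<or> (\<exists>s>0. s dvd \<beta> \<and> g = monom 1 s - 1)"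
  shows "binary_linear (Phi \<alpha> \<beta> ` gen_code \<alpha> \<beta>
           {(cyc \<alpha> b, 0), (cyc \<alpha> l, cyc \<beta> (f * h + 2 * f))})"
proof -
  have \<alpha>: "\<alpha> > 0" and \<beta>: "\<beta> > 0" using assms(1,2) by (auto intro: odd_pos)
  let ?C = "gen_code \<alpha> \<beta> {(cyc \<alpha> b, 0), (cyc \<alpha> l, cyc \<beta> (f * h + 2 * f))}"
  have code: "is_Z2Z4_cyclic_code \<alpha> \<beta> ?C"
    using \<alpha> \<beta> by (intro is_Z2Z4_cyclic_code_gen_code) (auto simp: R_elems_def)
  have residue: "?C \<subseteq> residue_code \<alpha> \<beta> (map_poly red2 (f * h))"
    using \<alpha> \<beta> by (rule gen_code_subset_residue_code)
  show ?thesis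
  proof (rule binary_linear_Phi_image[OF \<alpha> \<beta> code])
    fix u v assume uv: "u \<in> ?C" "v \<in> ?C"
    from assms(5) consider "g = 1" | s where "s > 0" "s dvd \<beta>" "g = monom 1 s - 1" by blast
    then show "(0, cyc \<beta> (2 * hadamard_poly \<beta> (snd u) (snd v))) \<in> ?C"
    proof cases
      case 1
      with assms(3) have "map_poly red2 (f * h) = monom 1 \<beta> - 1"
        by (simp add: map_poly_red2_diff map_poly_monom)
      with residue uv(1) show ?thesis by (intro two_mult_hadamard_poly_mem_trivial[OF \<beta> code]) auto
    next
      case (2 s)
      then obtain m where m: "\<beta> = s * m" and "m > 0" using \<beta> by (auto elim: dvdE)
      from assms(3) 2 m have fh: "f * h = geom_poly s m"
        by (intro eq_geom_poly_if_x_pow_minus_one_mult) (simp_all add: mult.commute)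
      have generator: "(cyc \<alpha> l, cyc \<beta> (f * h + 2 * f)) \<in> ?C"
        by (rule subsetD[OF gen_code_superset]) simp
      have "2 * (f * h + 2 * f) = 2 * geom_poly s m"
        by (simp only: two_mult_add_two_mult fh)
      with code residue generator uv show ?thesis
        unfolding m fh map_poly_red2_geom_poly
        by (intro two_mult_hadamard_poly_mem_periodic[OF \<alpha> 2(1) \<open>m > 0\<close>])
    qed
  qed
qed

end
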